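(* Let $(\mathfrak{A},\mathfrak{A}_0)$ be a CQ*-algebra as in the context, let $H=H^*\in\mathfrak{A}_0$, $\omega\in E(\mathfrak{A}_0)$ and $\alpha\in\mathbb{C}$. Consider the statements: (i) $\overline{\omega}$ is an eigenstate of $H$ with eigenvalue $\alpha$; (ii) $\omega$ is an eigenstate of $H$ with eigenvalue $\alpha$; (iii) for every $t\in\mathbb{R}$, $\overline{\omega}$ is an eigenstate of $e^{itH}$ with eigenvalue $e^{it\alpha}$; (iv) for every $t\in\mathbb{R}$, $\omega$ is an eigenstate of $e^{itH}$ with eigenvalue $e^{it\alpha}$. Then (i)$\Leftrightarrow$(ii), (iii)$\Leftrightarrow$(iv), and (ii)$\Rightarrow$(iv).
   Context: Let $\mathfrak{A}_0$ be a unital C*-algebra with C*-norm $\|\cdot\|_0$ and unit $I$, and $\|\cdot\|$ another norm on $\mathfrak{A}_0$ with $\|A\|\le\|A\|_0$, $\|AB\|\le\|A\|\,\|B\|_0$, $\|A^*\|=\|A\|$. $\mathfrak{A}$ is the $\|\cdot\|$-completion of $\mathfrak{A}_0$, with $XA:=\lim A_nA$, $AX:=\lim AA_n$ for $X\in\mathfrak{A}$, $A\in\mathfrak{A}_0$, $A_n\in\mathfrak{A}_0$, $\|A_n-X\|\to0$. $E(\mathfrak{A}_0)$ is the set of positive linear functionals $\omega$ on $\mathfrak{A}_0$ with $\omega(I)=1$ and $|\omega(A)|\le\gamma\|A\|$ for some $\gamma>0$; $\overline{\omega}$ is its $\|\cdot\|$-continuous extension to $\mathfrak{A}$. For $Y\in\mathfrak{A}$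 and $\beta\in\mathbb{C}$, $\overline{\omega}$ is an eigenstate of $Y$ with eigenvalue $\beta$ if $\overline{\omega}(AY)=\beta\,\overline{\omega}(A)$ for all $A\in\mathfrak{A}_0$; for $Y\in\mathfrak{A}_0$, $\omega$ is an eigenstate of $Y$ with eigenvalue $\beta$ if $\omega(AY)=\beta\,\omega(A)$ for all $A\in\mathfrak{A}_0$. $e^{itH}\in\mathfrak{A}_0$ is defined by functional calculus. *)

theory Defs
  imports "HOL-Analysis.Analysis"
begin

text \<open>A unital complex algebra is encoded as a unital real Banach algebra together with a
  central element J with J*J = -1 (J plays the role of i1); complex scalar multiplication
  is then c.x = Re c x + Im c (J x).\<close>

definition cscale :: "'a::real_normed_algebra_1 \<Rightarrow> complex \<Rightarrow> 'a \<Rightarrow> 'a" where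
  "cscale J c x = Re c *\<^sub>R x + Im c *\<^sub>R (J * x)"

definition unital_cstar_algebra :: "'a::{real_normed_algebra_1,banach} \<Rightarrow> ('a \<Rightarrow> 'a) \<Rightarrow> bool" where
  "unital_cstar_algebra J st \<longleftrightarrow>
     (\<forall>x. J * x = x * J) \<and> J * J = - 1 \<and>
     (\<forall>c x. norm (cscale J c x) = cmod c * norm x) \<and>
     (\<forall>x y. st (x + y) = st x + st y) \<and>
     (\<forall>c x. st (cscale J c x) = cscale J (cnj c) (st x)) \<and>
     (\<forall>x y. st (x * y) = st y * st x) \<and>
     (\<forall>x. st (st x) = x) \<and>
     (\<forall>x. norm (st x * x) = (norm x)\<^sup>2)"

definition cq_norm :: "'a::{real_normed_algebra_1,banach} \<Rightarrow> ('a \<Rightarrow> 'a) \<Rightarrow> ('a \<Rightarrow> real) \<Rightarrow> bool" where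
  "cq_norm J st n \<longleftrightarrow>
     (\<forall>x. n x = 0 \<longleftrightarrow> x = 0) \<and>
     (\<forall>x y. n (x + y) \<le> n x + n y) \<and>
     (\<forall>c x. n (cscale J c x) = cmod c * n x) \<and>
     (\<forall>x. n x \<le> norm x) \<and>
     (\<forall>x y. n (x * y) \<le> n x * norm y) \<and>
     (\<forall>x. n (st x) = n x)"

definition is_completion :: "('a::real_normed_vector \<Rightarrow> real) \<Rightarrow> ('a \<Rightarrow> 'b::banach) \<Rightarrow> bool" where
  "is_completion n j \<longleftrightarrow> linear j \<and> (\<forall>x. norm (j x) = n x) \<and> closure (range j) = UNIV"

definition lmul_compl :: "('a::real_normed_algebra_1 \<Rightarrow> 'b::real_normed_vector) \<Rightarrow> 'a \<Rightarrow> 'b \<Rightarrow> 'b" where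
  "lmul_compl j A X = (THE Y. \<forall>s. (\<lambda>k. j (s k)) \<longlonglongrightarrow> X \<longrightarrow> (\<lambda>k. j (A * s k)) \<longlonglongrightarrow> Y)"

definition ext_fun :: "('a \<Rightarrow> 'b::real_normed_vector) \<Rightarrow> ('a \<Rightarrow> complex) \<Rightarrow> 'b \<Rightarrow> complex" where
  "ext_fun j \<omega> X = (THE c. \<forall>s. (\<lambda>k. j (s k)) \<longlonglongrightarrow> X \<longrightarrow> (\<lambda>k. \<omega> (s k)) \<longlonglongrightarrow> c)"

definition states_E :: "'a::{real_normed_algebra_1,banach} \<Rightarrow> ('a \<Rightarrow> 'a) \<Rightarrow> ('a \<Rightarrow> real) \<Rightarrow> ('a \<Rightarrow> complex) set" where
  "states_E J st n = {\<omega>.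
     (\<forall>x y. \<omega> (x + y) = \<omega> x + \<omega> y) \<and>
     (\<forall>c x. \<omega> (cscale J c x) = c * \<omega> x) \<and>
     (\<forall>x. \<omega> (st x * x) \<in> \<real> \<and> 0 \<le> Re (\<omega> (st x * x))) \<and>
     \<omega> 1 = 1 \<and>
     (\<exists>\<gamma>>0. \<forall>x. cmod (\<omega> x) \<le> \<gamma> * n x)}"

definition eigenstate_compl :: "('a::real_normed_algebra_1 \<Rightarrow> 'b::real_normed_vector) \<Rightarrow> ('a \<Rightarrow> complex) \<Rightarrow> 'b \<Rightarrow> complex \<Rightarrow> bool" where
  "eigenstate_compl j \<omega> Y \<beta> \<longleftrightarrow> (\<forall>A. ext_fun j \<omega> (lmul_compl j A Y) = \<beta> * ext_fun j \<omega> (j A))"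

definition eigenstate :: "('a::times \<Rightarrow> complex) \<Rightarrow> 'a \<Rightarrow> complex \<Rightarrow> bool" where
  "eigenstate \<omega> Y \<beta> \<longleftrightarrow> (\<forall>A. \<omega> (A * Y) = \<beta> * \<omega> A)"

end

theory Submission
  imports Defs
begin

text \<open>Since a state is bounded by the second norm, and so is left multiplication, because
  \<open>n (A x) = n (x\<^sup>* A\<^sup>*) \<le> n x \<parallel>A\<^sup>*\<parallel>\<close>, the extension of \<open>\<omega>\<close> and the product of the
  completion agree with the original ones on \<open>A\<^sub>0\<close>; this gives (i) \<Leftrightarrow> (ii) and
  (iii) \<Leftrightarrow> (iv). For (ii) \<Rightarrow> (iv): if \<open>\<omega> (B H) = \<alpha> \<omega> B\<close> for all \<open>B\<close>, the same
  holds for \<open>X = i t H\<close> with eigenvalue \<open>i t \<alpha>\<close>, hence for all powers of \<open>X\<close>, and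
  summing the exponential series against the bounded functional \<open>x \<mapsto> \<omega> (A x)\<close>
  gives the eigenvalue \<open>e\<^sup>i\<^sup>t\<^sup>\<alpha>\<close> for \<open>e\<^sup>X\<close>.\<close>

lemma tendsto_by_norm_bound:
  fixes f :: "nat \<Rightarrow> 'a::real_normed_vector" and g :: "nat \<Rightarrow> 'b::real_normed_vector"
  assumes bound: "\<And>k. norm (f k - L) \<le> C * norm (g k - M)" and "g \<longlonglongrightarrow> M"
  shows "f \<longlonglongrightarrow> L"
proof -
  have "(\<lambda>k. norm (g k - M)) \<longlonglongrightarrow> 0"
    using assms(2) by (intro tendsto_norm_zero LIM_zero)
  then have "(\<lambda>k. C * norm (g k - M)) \<longlonglongrightarrow> 0"
    by (rule tendsto_mult_right_zero)
  then have "(\<lambda>k. f k - L) \<longlonglongrightarrow> 0"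
    by (rule Lim_null_comparison[OF always_eventually[OF allI[OF bound]]])
  then show ?thesis
    by (rule Lim_null[THEN iffD2])
qed

lemma ext_fun_eqI:
  assumes "\<And>s. (\<lambda>k. j (s k)) \<longlonglongrightarrow> j A \<Longrightarrow> (\<lambda>k. \<omega> (s k)) \<longlonglongrightarrow> \<omega> A"
  shows "ext_fun j \<omega> (j A) = \<omega> A"
  unfolding ext_fun_def
proof (rule the_equality)
  fix c
  assume "\<forall>s. (\<lambda>k. j (s k)) \<longlonglongrightarrow> j A \<longrightarrow> (\<lambda>k. \<omega> (s k)) \<longlonglongrightarrow> c"
  from this[rule_format, of "\<lambda>_. A"] have "(\<lambda>k. \<omega> A) \<longlonglongrightarrow> c"
    by simp
  then show "c = \<omega> A"
    by (simp add: LIMSEQ_const_iff)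
qed (use assms in blast)

lemma lmul_compl_eqI:
  assumes "\<And>s. (\<lambda>k. j (s k)) \<longlonglongrightarrow> j Y \<Longrightarrow> (\<lambda>k. j (A * s k)) \<longlonglongrightarrow> j (A * Y)"
  shows "lmul_compl j A (j Y) = j (A * Y)"
  unfolding lmul_compl_def
proof (rule the_equality)
  fix c
  assume "\<forall>s. (\<lambda>k. j (s k)) \<longlonglongrightarrow> j Y \<longrightarrow> (\<lambda>k. j (A * s k)) \<longlonglongrightarrow> c"
  from this[rule_format, of "\<lambda>_. Y"] have "(\<lambda>k. j (A * Y)) \<longlonglongrightarrow> c"
    by simp
  then show "c = j (A * Y)"
    by (simp add: LIMSEQ_const_iff)
qed (use assms in blast)

lemma ext_fun_isometry:
  fixes j :: "'a::real_normed_vector \<Rightarrow> 'b::real_normed_vector" and \<omega> :: "'a \<Rightarrow> complex"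
  assumes "linear j" and "\<And>x. norm (j x) = n x"
    and "linear \<omega>" and "\<And>x. cmod (\<omega> x) \<le> \<gamma> * n x"
  shows "ext_fun j \<omega> (j A) = \<omega> A"
proof (rule ext_fun_eqI, rule tendsto_by_norm_bound)
  fix s and k :: nat
  have "norm (\<omega> (s k) - \<omega> A) = cmod (\<omega> (s k - A))"
    using \<open>linear \<omega>\<close> by (simp add: linear_diff)
  also have "\<dots> \<le> \<gamma> * n (s k - A)"
    by fact
  also have "n (s k - A) = norm (j (s k) - j A)"
    using assms(1,2) by (metis linear_diff)
  finally show "norm (\<omega> (s k) - \<omega> A) \<le> \<gamma> * norm (j (s k) - j A)" .
qed

lemma lmul_compl_isometry:
  fixes j :: "'a::real_normed_algebra_1 \<Rightarrow> 'b::real_normed_vector"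
  assumes "linear j" and "\<And>x. norm (j x) = n x" and "\<And>A x. n (A * x) \<le> K A * n x"
  shows "lmul_compl j A (j Y) = j (A * Y)"
proof (rule lmul_compl_eqI, rule tendsto_by_norm_bound)
  fix s and k :: nat
  have "norm (j (A * s k) - j (A * Y)) = n (A * (s k - Y))"
    using assms(1,2) by (metis linear_diff right_diff_distrib)
  also have "\<dots> \<le> K A * n (s k - Y)"
    by fact
  also have "n (s k - Y) = norm (j (s k) - j Y)"
    using assms(1,2) by (metis linear_diff)
  finally show "norm (j (A * s k) - j (A * Y)) \<le> K A * norm (j (s k) - j Y)" .
qed

lemma cq_norm_mult_left_le:
  assumes "unital_cstar_algebra J st" and "cq_norm J st n"
  shows "n (A * x) \<le> norm (st A) * n x"
proof -
  have st_mult: "st (A * x) = st x * st A"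
    using assms(1) by (simp add: unital_cstar_algebra_def)
  have n_st: "\<And>y. n (st y) = n y" and n_mult: "\<And>y z. n (y * z) \<le> n y * norm z"
    using assms(2) by (simp_all add: cq_norm_def)
  have "n (A * x) = n (st x * st A)"
    by (metis n_st st_mult)
  also have "\<dots> \<le> n x * norm (st A)"
    using n_mult[of "st x" "st A"] by (simp add: n_st)
  finally show ?thesis
    by (simp add: mult.commute)
qed

lemma cscale_of_real: "cscale J (of_real r) x = r *\<^sub>R x"
  by (simp add: cscale_def)

lemma state_linear:
  assumes "\<omega> \<in> states_E J st n"
  shows "linear \<omega>"
proof (rule linearI)
  fix r x
  have "\<omega> (cscale J (of_real r) x) = of_real r * \<omega> x"
    using assms by (simp add: states_E_def)
  then show "\<omega> (r *\<^sub>R x) = r *\<^sub>R \<omega> x"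
    by (simp add: cscale_of_real scaleR_conv_of_real)
qed (use assms in \<open>simp add: states_E_def\<close>)

lemma state_bounded_linear:
  assumes "cq_norm J st n" and "\<omega> \<in> states_E J st n"
  shows "bounded_linear \<omega>"
proof -
  obtain \<gamma> where "\<gamma> > 0" and \<gamma>: "\<And>x. cmod (\<omega> x) \<le> \<gamma> * n x"
    using assms(2) by (auto simp: states_E_def)
  have "norm (\<omega> x) \<le> norm x * \<gamma>" for x
  proof -
    have "n x \<le> norm x"
      using assms(1) by (simp add: cq_norm_def)
    then have "\<gamma> * n x \<le> \<gamma> * norm x"
      using \<open>\<gamma> > 0\<close> by simp
    then show ?thesis
      using \<gamma>[of x] by (simp add: mult.commute)
  qed
  with state_linear[OF assms(2)] show ?thesis
    by (intro bounded_linear_intro) (auto simp: linear_add linear_scale)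
qed

lemma eigenstate_compl_iff:
  fixes j :: "'a::{real_normed_algebra_1,banach} \<Rightarrow> 'b::banach"
  assumes "unital_cstar_algebra J st" and "cq_norm J st n" and "is_completion n j"
    and "\<omega> \<in> states_E J st n"
  shows "eigenstate_compl j \<omega> (j Y) \<beta> \<longleftrightarrow> eigenstate \<omega> Y \<beta>"
proof -
  obtain \<gamma> where \<gamma>: "\<And>x. cmod (\<omega> x) \<le> \<gamma> * n x"
    using assms(4) by (auto simp: states_E_def)
  have "linear j" and nj: "\<And>x. norm (j x) = n x"
    using assms(3) by (auto simp: is_completion_def)
  note ext = ext_fun_isometry[OF \<open>linear j\<close> nj state_linear[OF assms(4)] \<gamma>]
  note lmul = lmul_compl_isometry[where K = "\<lambda>A. norm (st A)",
      OF \<open>linear j\<close> nj cq_norm_mult_left_le[OF assms(1,2)]]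
  show ?thesis
    unfolding eigenstate_compl_def eigenstate_def by (simp only: ext lmul)
qed

lemma eigenstate_power:
  fixes \<omega> :: "'a::monoid_mult \<Rightarrow> complex"
  assumes "eigenstate \<omega> X c"
  shows "eigenstate \<omega> (X ^ k) (c ^ k)"
proof (induction k)
  case (Suc k)
  then show ?case
    using assms by (simp add: eigenstate_def power_Suc2 mult.assoc[symmetric])
qed (simp add: eigenstate_def)

lemma eigenstate_exp:
  fixes \<omega> :: "'a::{real_normed_algebra_1,banach} \<Rightarrow> complex"
  assumes "bounded_linear \<omega>" and "eigenstate \<omega> X c"
  shows "eigenstate \<omega> (exp X) (exp c)"
  unfolding eigenstate_def
proof
  fix A
  have "bounded_linear (\<lambda>x. \<omega> (A * x))"
    using assms(1) bounded_linear_mult_right by (rule bounded_linear_compose)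
  then have "(\<lambda>k. \<omega> (A * (X ^ k /\<^sub>R fact k))) sums \<omega> (A * exp X)"
    by (rule bounded_linear.sums[OF _ exp_converges])
  moreover have "\<omega> (A * (X ^ k /\<^sub>R fact k)) = (c ^ k /\<^sub>R fact k) * \<omega> A" for k
  proof -
    have "\<omega> (A * (X ^ k /\<^sub>R fact k)) = \<omega> (A * X ^ k) /\<^sub>R fact k"
      using linear_scale[OF bounded_linear.linear[OF assms(1)]] by (simp only: mult_scaleR_right)
    then show ?thesis
      using eigenstate_power[OF assms(2)] by (simp add: eigenstate_def)
  qed
  ultimately have "(\<lambda>k. (c ^ k /\<^sub>R fact k) * \<omega> A) sums \<omega> (A * exp X)"
    by simp
  then show "\<omega> (A * exp X) = exp c * \<omega> A"
    using sums_mult2[OF exp_converges] by (rule sums_unique2)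
qed

lemma eigenstate_generator:
  assumes "\<And>x. J * x = x * J" and "\<And>c x. \<omega> (cscale J c x) = c * \<omega> x"
    and "eigenstate \<omega> H \<alpha>"
  shows "eigenstate \<omega> (t *\<^sub>R (J * H)) (\<i> * of_real t * \<alpha>)"
  unfolding eigenstate_def
proof
  fix B
  have "B * (J * H) = J * (B * H)"
    by (metis assms(1) mult.assoc)
  then have "B * (t *\<^sub>R (J * H)) = cscale J (\<i> * of_real t) (B * H)"
    by (simp add: cscale_def)
  then show "\<omega> (B * (t *\<^sub>R (J * H))) = \<i> * of_real t * \<alpha> * \<omega> B"
    using assms(2,3) by (simp add: eigenstate_def)
qed

theorem lemma5p3:
  fixes J H :: "'a::{real_normed_algebra_1,banach}"
    and st :: "'a \<Rightarrow> 'a" and n :: "'a \<Rightarrow> real"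
    and j :: "'a \<Rightarrow> 'b::banach"
    and \<omega> :: "'a \<Rightarrow> complex" and \<alpha> :: complex
  assumes "unital_cstar_algebra J st"
    and "cq_norm J st n"
    and "is_completion n j"
    and "st H = H"
    and "\<omega> \<in> states_E J st n"
  shows "(eigenstate_compl j \<omega> (j H) \<alpha> \<longleftrightarrow> eigenstate \<omega> H \<alpha>)
    \<and> ((\<forall>t::real. eigenstate_compl j \<omega> (j (exp (t *\<^sub>R (J * H)))) (exp (\<i> * of_real t * \<alpha>)))
        \<longleftrightarrow> (\<forall>t::real. eigenstate \<omega> (exp (t *\<^sub>R (J * H))) (exp (\<i> * of_real t * \<alpha>))))
    \<and> (eigenstate \<omega> H \<alpha> \<longrightarrow>
        (\<forall>t::real. eigenstate \<omega> (exp (t *\<^sub>R (J * H))) (exp (\<i> * of_real t * \<alpha>))))"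
proof -
  have central: "\<And>x. J * x = x * J"
    using assms(1) by (simp add: unital_cstar_algebra_def)
  have homogeneous: "\<And>c x. \<omega> (cscale J c x) = c * \<omega> x"
    using assms(5) by (simp add: states_E_def)
  have "eigenstate \<omega> (exp (t *\<^sub>R (J * H))) (exp (\<i> * of_real t * \<alpha>))"
    if "eigenstate \<omega> H \<alpha>" for t
    by (rule eigenstate_exp[OF state_bounded_linear[OF assms(2,5)]
          eigenstate_generator[OF central homogeneous that]])
  moreover have "eigenstate_compl j \<omega> (j Y) \<beta> \<longleftrightarrow> eigenstate \<omega> Y \<beta>" for Y \<beta>
    by (rule eigenstate_compl_iff[OF assms(1-3,5)])
  ultimately show ?thesis
    by simp
qed

end
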